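(* The relation $\le^{\oplus}$ on $\mathrm{Eq}$ is antisymmetric and transitive; consequently $<^{\oplus}$ (defined by $C_1<^{\oplus}C_2$ iff $C_1\le^{\oplus}C_2$ and $C_1\neq C_2$) is a strict partial order on $\mathrm{Eq}$.
   Context: $G=G[Q]$ is the query graph of a Boolean CQ without self-joins whose atoms are $R(u,v)$ with first attribute the key: vertices are variables, and each atom gives an edge $e_R=(u_R,v_R)$, consistent or inconsistent according to the type of $R$; $E^i$ is the set of inconsistent edges. $x\to y$ means there is a directed path (possibly with zero edges) from $x$ to $y$ all of whose edges are consistent; $u^{\oplus}=\{v: u\to v\}$; $u^+$ is the set of vertices reachable from $u$ by any directed path. For $R,S\in E^i$, $R\sim S$ iff $u_S\in u_R^+$ and $u_R\in u_S^+$. $\mathrm{Eq}$ is the set of $\sim$-equivalence classes of $E^i$. For $C\in\mathrm{Eq}$, $C^{\oplus}=\bigcap_{R\in C}u_R^{\oplus}$. For $C_1,C_2\in\mathrm{Eq}$, $C_1\le^{\oplus}C_2$ iff there exists $S\in C_2$ with $u_S\in C_1^{\oplus}$. *)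

theory Defs
  imports Main
begin

text \<open>A query graph of a self-join-free Boolean CQ whose atoms are binary
  R(u,v) with the first attribute as key.  Atoms are elements of the set
  atoms; key R = u_R, val R = v_R; incons R holds iff R is of inconsistent type
  (so e_R is an inconsistent edge).  Since the query has no self-joins, atoms
  and edges are in bijection, and we identify them.\<close>

definition all_edges :: "'r set \<Rightarrow> ('r \<Rightarrow> 'v) \<Rightarrow> ('r \<Rightarrow> 'v) \<Rightarrow> ('v \<times> 'v) set" where
  "all_edges atoms key val = {(key R, val R) | R. R \<in> atoms}"

definition cons_edges :: "'r set \<Rightarrow> ('r \<Rightarrow> 'v) \<Rightarrow> ('r \<Rightarrow> 'v) \<Rightarrow> ('r \<Rightarrow> bool) \<Rightarrow> ('v \<times> 'v) set" where
  "cons_edges atoms key val incons = {(key R, val R) | R. R \<in> atoms \<and> \<not> incons R}"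

definition Ei :: "'r set \<Rightarrow> ('r \<Rightarrow> bool) \<Rightarrow> 'r set" where
  "Ei atoms incons = {R \<in> atoms. incons R}"

definition oplus :: "'r set \<Rightarrow> ('r \<Rightarrow> 'v) \<Rightarrow> ('r \<Rightarrow> 'v) \<Rightarrow> ('r \<Rightarrow> bool) \<Rightarrow> 'v \<Rightarrow> 'v set" where
  "oplus atoms key val incons u = {w. (u, w) \<in> (cons_edges atoms key val incons)\<^sup>*}"

definition reach :: "'r set \<Rightarrow> ('r \<Rightarrow> 'v) \<Rightarrow> ('r \<Rightarrow> 'v) \<Rightarrow> 'v \<Rightarrow> 'v set" where
  "reach atoms key val u = {w. (u, w) \<in> (all_edges atoms key val)\<^sup>*}"

definition sim :: "'r set \<Rightarrow> ('r \<Rightarrow> 'v) \<Rightarrow> ('r \<Rightarrow> 'v) \<Rightarrow> ('r \<Rightarrow> bool) \<Rightarrow> ('r \<times> 'r) set" where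
  "sim atoms key val incons =
     {(R, S). R \<in> Ei atoms incons \<and> S \<in> Ei atoms incons \<and>
              key S \<in> reach atoms key val (key R) \<and> key R \<in> reach atoms key val (key S)}"

definition Eq :: "'r set \<Rightarrow> ('r \<Rightarrow> 'v) \<Rightarrow> ('r \<Rightarrow> 'v) \<Rightarrow> ('r \<Rightarrow> bool) \<Rightarrow> 'r set set" where
  "Eq atoms key val incons = Ei atoms incons // sim atoms key val incons"

definition class_oplus :: "'r set \<Rightarrow> ('r \<Rightarrow> 'v) \<Rightarrow> ('r \<Rightarrow> 'v) \<Rightarrow> ('r \<Rightarrow> bool) \<Rightarrow> 'r set \<Rightarrow> 'v set" where
  "class_oplus atoms key val incons C = (\<Inter>R\<in>C. oplus atoms key val incons (key R))"

definition le_oplus :: "'r set \<Rightarrow> ('r \<Rightarrow> 'v) \<Rightarrow> ('r \<Rightarrow> 'v) \<Rightarrow> ('r \<Rightarrow> bool) \<Rightarrow> ('r set \<times> 'r set) set" where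
  "le_oplus atoms key val incons =
     {(C1, C2). C1 \<in> Eq atoms key val incons \<and> C2 \<in> Eq atoms key val incons \<and>
                (\<exists>S\<in>C2. key S \<in> class_oplus atoms key val incons C1)}"

definition less_oplus :: "'r set \<Rightarrow> ('r \<Rightarrow> 'v) \<Rightarrow> ('r \<Rightarrow> 'v) \<Rightarrow> ('r \<Rightarrow> bool) \<Rightarrow> ('r set \<times> 'r set) set" where
  "less_oplus atoms key val incons =
     {(C1, C2). (C1, C2) \<in> le_oplus atoms key val incons \<and> C1 \<noteq> C2}"

end

theory Submission
  imports Defs
begin

text \<open>Antisymmetry: if each of two classes has a key reachable along consistent paths from
  every key of the other, two such keys reach each other in the query graph, so they are
  \<open>\<sim>\<close>-related and the classes coincide.  Transitivity: consistent paths compose, so if every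
  key of \<open>C\<^sub>1\<close> reaches the key of \<open>S \<in> C\<^sub>2\<close> and every key of \<open>C\<^sub>2\<close> reaches the key of
  \<open>U \<in> C\<^sub>3\<close>, then every key of \<open>C\<^sub>1\<close> reaches the key of \<open>U\<close> through that of \<open>S\<close>.\<close>

lemma equiv_sim: "equiv (Ei atoms incons) (sim atoms key val incons)"
  unfolding equiv_def refl_on_def sym_def trans_def sim_def reach_def
  by (auto intro: rtrancl_trans)

lemma Eq_subset_Ei: "C \<in> Eq atoms key val incons \<Longrightarrow> C \<subseteq> Ei atoms incons"
  unfolding Eq_def using in_quotient_imp_subset[OF equiv_sim] .

lemma oplus_subset_reach: "oplus atoms key val incons u \<subseteq> reach atoms key val u"
proof -
  have "cons_edges atoms key val incons \<subseteq> all_edges atoms key val"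
    unfolding cons_edges_def all_edges_def by blast
  then show ?thesis
    unfolding oplus_def reach_def using rtrancl_mono by blast
qed

lemma oplus_trans:
  "v \<in> oplus atoms key val incons u \<Longrightarrow> w \<in> oplus atoms key val incons v
    \<Longrightarrow> w \<in> oplus atoms key val incons u"
  unfolding oplus_def by auto

lemma sim_if_oplus_mutual:
  assumes "S \<in> Ei atoms incons" "T \<in> Ei atoms incons"
    and "key S \<in> oplus atoms key val incons (key T)"
    and "key T \<in> oplus atoms key val incons (key S)"
  shows "(T, S) \<in> sim atoms key val incons"
  using assms oplus_subset_reach[of atoms key val incons] unfolding sim_def by auto

lemma antisym_le_oplus: "antisym (le_oplus atoms key val incons)"
proof (rule antisymI)
  fix C1 C2
  assume "(C1, C2) \<in> le_oplus atoms key val incons" "(C2, C1) \<in> le_oplus atoms key val incons"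
  then obtain S T where S: "S \<in> C2" "key S \<in> class_oplus atoms key val incons C1"
    and T: "T \<in> C1" "key T \<in> class_oplus atoms key val incons C2"
    and C1: "C1 \<in> Eq atoms key val incons" and C2: "C2 \<in> Eq atoms key val incons"
    unfolding le_oplus_def by blast
  have "(T, S) \<in> sim atoms key val incons"
  proof (rule sim_if_oplus_mutual)
    show "S \<in> Ei atoms incons" "T \<in> Ei atoms incons"
      using S T Eq_subset_Ei[OF C1] Eq_subset_Ei[OF C2] by blast+
    show "key S \<in> oplus atoms key val incons (key T)"
      "key T \<in> oplus atoms key val incons (key S)"
      using S T unfolding class_oplus_def by blast+
  qed
  then show "C1 = C2"
    using quotient_eq_iff[OF equiv_sim C1[unfolded Eq_def] C2[unfolded Eq_def] T(1) S(1)] by simp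
qed

lemma trans_le_oplus: "trans (le_oplus atoms key val incons)"
proof (rule transI)
  fix C1 C2 C3
  assume "(C1, C2) \<in> le_oplus atoms key val incons" "(C2, C3) \<in> le_oplus atoms key val incons"
  then obtain S U where S: "S \<in> C2" "key S \<in> class_oplus atoms key val incons C1"
    and U: "U \<in> C3" "key U \<in> class_oplus atoms key val incons C2"
    and "C1 \<in> Eq atoms key val incons" "C3 \<in> Eq atoms key val incons"
    unfolding le_oplus_def by blast
  moreover have "key U \<in> class_oplus atoms key val incons C1"
    using S U unfolding class_oplus_def by (blast intro: oplus_trans)
  ultimately show "(C1, C3) \<in> le_oplus atoms key val incons"
    unfolding le_oplus_def by blast
qed

lemma less_oplus_eq_le_oplus_diff_Id:
  "less_oplus atoms key val incons = le_oplus atoms key val incons - Id"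
  unfolding less_oplus_def by blast

theorem proposition5p2:
  fixes atoms :: "'r set" and key val :: "'r \<Rightarrow> 'v" and incons :: "'r \<Rightarrow> bool"
  assumes "finite atoms"
  shows "antisym (le_oplus atoms key val incons)
       \<and> trans (le_oplus atoms key val incons)
       \<and> irrefl_on (Eq atoms key val incons) (less_oplus atoms key val incons)
       \<and> trans (less_oplus atoms key val incons)"
proof (intro conjI)
  show "irrefl_on (Eq atoms key val incons) (less_oplus atoms key val incons)"
    unfolding irrefl_on_def less_oplus_eq_le_oplus_diff_Id by blast
  show "trans (less_oplus atoms key val incons)"
    unfolding less_oplus_eq_le_oplus_diff_Id
    using trans_diff_Id[OF trans_le_oplus antisym_le_oplus] .
qed (rule antisym_le_oplus, rule trans_le_oplus)

end
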